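(* Let $\mathcal A=C_b(\mathbb R)$ act on $L^2(\mathbb R)$ by multiplication, $(\pi(f)\psi)(x)=f(x)\psi(x)$, let $\alpha:\mathbb R\to\mathrm{Aut}(\mathcal A)$ be the translation action $(\alpha_tf)(x)=f(x+t)$, and let $(U_t\psi)(x)=\psi(x+t)$ on $L^2(\mathbb R)$. Then the covariant representation $(\pi,U)$ of $(\mathcal A,\mathbb R,\alpha)$ is not a cross representation with respect to the host $\mathcal L=C^*(\mathbb R)$; that is, $\pi(\mathcal A)U_{\mathcal L}(\mathcal L)\not\subseteq U_{\mathcal L}(\mathcal L)\mathcal B(L^2(\mathbb R))$.
   Context: $U_{\mathcal L}$ is the integrated representation of $C^*(\mathbb R)$, so $U_{\mathcal L}(\mathcal L)=\{f(P):f\in C_0(\mathbb R)\}$ where $U_t=e^{itP}$, $P=-i\frac{d}{dx}$; $U_{\mathcal L}(\mathcal L)\mathcal B(L^2(\mathbb R))$ denotes the set of products $LB$. *)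

theory Defs
  imports "HOL-Analysis.Analysis"
begin

text \<open>Concrete model of L^2(R): square-integrable Borel functions real => complex,
  identified modulo equality almost everywhere (w.r.t. Lebesgue measure).\<close>

definition L2 :: "(real \<Rightarrow> complex) \<Rightarrow> bool" where
  "L2 \<psi> \<longleftrightarrow> \<psi> \<in> borel_measurable lborel \<and> integrable lborel (\<lambda>x. (cmod (\<psi> x))\<^sup>2)"

definition L2norm :: "(real \<Rightarrow> complex) \<Rightarrow> real" where
  "L2norm \<psi> = sqrt (LINT x|lborel. (cmod (\<psi> x))\<^sup>2)"

type_synonym op = "(real \<Rightarrow> complex) \<Rightarrow> (real \<Rightarrow> complex)"

definition op_eq :: "op \<Rightarrow> op \<Rightarrow> bool" where
  "op_eq S T \<longleftrightarrow> (\<forall>\<psi>. L2 \<psi> \<longrightarrow> (AE x in lborel. S \<psi> x = T \<psi> x))"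

definition bounded_op :: "op \<Rightarrow> bool" where
  "bounded_op T \<longleftrightarrow>
     (\<forall>\<psi>. L2 \<psi> \<longrightarrow> L2 (T \<psi>)) \<and>
     (\<forall>\<psi> \<phi>. L2 \<psi> \<longrightarrow> L2 \<phi> \<longrightarrow> (AE x in lborel. \<psi> x = \<phi> x) \<longrightarrow>
        (AE x in lborel. T \<psi> x = T \<phi> x)) \<and>
     (\<forall>\<psi> \<phi> c. L2 \<psi> \<longrightarrow> L2 \<phi> \<longrightarrow>
        (AE x in lborel. T (\<lambda>y. \<psi> y + c * \<phi> y) x = T \<psi> x + c * T \<phi> x)) \<and>
     (\<exists>C. \<forall>\<psi>. L2 \<psi> \<longrightarrow> L2norm (T \<psi>) \<le> C * L2norm \<psi>)"

definition op_dist :: "op \<Rightarrow> op \<Rightarrow> real" where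
  "op_dist S T = Sup {L2norm (\<lambda>x. S \<psi> x - T \<psi> x) | \<psi>. L2 \<psi> \<and> L2norm \<psi> \<le> 1}"

definition mult_op :: "(real \<Rightarrow> complex) \<Rightarrow> op" where
  "mult_op f \<psi> = (\<lambda>x. f x * \<psi> x)"

definition Cb :: "(real \<Rightarrow> complex) set" where
  "Cb = {f. continuous_on UNIV f \<and> bounded (range f)}"

definition transl :: "real \<Rightarrow> op" where
  "transl t \<psi> = (\<lambda>x. \<psi> (x + t))"

definition integrated :: "(real \<Rightarrow> complex) \<Rightarrow> op" where
  "integrated \<phi> \<psi> = (\<lambda>x. LINT t|lborel. \<phi> t * transl t \<psi> x)"

text \<open>U_L(L) for L = C^*(R): the image of the integrated representation of C^*(R),
  i.e. the operator-norm closure of the image of L^1(R).\<close>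
definition UL :: "op set" where
  "UL = {L. bounded_op L \<and>
           (\<forall>e>0. \<exists>\<phi>. integrable lborel \<phi> \<and> op_dist L (integrated \<phi>) < e)}"

end

theory Submission
  imports Defs
begin

text \<open>
  Take \<open>f x = cis (x\<^sup>2)\<close> and for \<open>L\<close> the convolution by the indicator of \<open>[0, 1]\<close>, and test
  operators against the chirps \<open>chirp a x = cis (x\<^sup>2)\<close> on \<open>[a, a + 1]\<close>. For
  \<open>\<psi> = c\<close> on \<open>[a, a + 2]\<close>, \<open>L \<psi> = c\<close> on \<open>[a, a + 1]\<close>, so \<open>\<langle>f L \<psi>, chirp a\<rangle> = c\<close> for every \<open>a\<close>.

  On the other hand, every \<open>L'\<close> in \<open>U\<^sub>L(L)\<close> has small pairings \<open>\<langle>L' \<eta>, chirp a\<rangle>\<close>, uniformly on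
  the unit ball, for suitable \<open>a\<close>. By norm approximation it suffices to take \<open>L'\<close> the convolution
  by some \<open>\<phi> \<in> L\<^sup>1\<close>, where the pairing is \<open>\<integral> \<phi> t G t dt\<close> with \<open>G t = \<langle>\<eta>(\<cdot> + t), chirp a\<rangle>\<close>.
  If \<open>2 a s = \<pi>\<close>, translating the chirp by \<open>s\<close> turns its phase by almost \<open>\<pi>\<close>, so
  \<open>G (t + s) \<approx> - G t\<close>; averaging the integral with its translate by \<open>s\<close> bounds it by the
  \<open>L\<^sup>1\<close>-modulus of continuity of \<open>\<phi>\<close> at \<open>s\<close> plus \<open>O(\<surd>s)\<close>.

  If \<open>f L = L' B\<close> with \<open>B\<close> bounded, taking \<open>\<eta> = B \<psi>\<close> with \<open>c\<close> small against the norm of \<open>B\<close>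
  gives a pairing equal to \<open>c\<close> and smaller than \<open>c\<close>.
\<close>

section \<open>Square-integrable functions\<close>

lemma ennreal_le_of_power2_le:
  assumes "x\<^sup>2 \<le> (ennreal r)\<^sup>2" "r \<ge> 0"
  shows "x \<le> ennreal r"
proof (cases x rule: ennreal_cases)
  case (real q)
  then have "q\<^sup>2 \<le> r\<^sup>2" using assms by (simp add: ennreal_power)
  then have "q \<le> r" using assms(2) by (rule power2_le_imp_le)
  then show ?thesis using real by simp
next
  case top
  then show ?thesis using assms by (simp add: ennreal_power top_unique)
qed

lemma L2_iff_nn_integral:
  "L2 g \<longleftrightarrow> g \<in> borel_measurable borel \<and> (\<integral>\<^sup>+x. ennreal ((cmod (g x))\<^sup>2) \<partial>lborel) < \<infinity>"
  unfolding L2_def integrable_iff_bounded by auto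

lemma L2norm_eq_nn_integral:
  assumes "g \<in> borel_measurable borel"
  shows "L2norm g = sqrt (enn2real (\<integral>\<^sup>+x. ennreal ((cmod (g x))\<^sup>2) \<partial>lborel))"
  unfolding L2norm_def by (subst integral_eq_nn_integral) (use assms in auto)

lemma L2norm_nonneg: "L2norm g \<ge> 0"
  by (simp add: L2norm_def)

lemma ennreal_L2norm_power2:
  assumes "L2 g"
  shows "ennreal ((L2norm g)\<^sup>2) = (\<integral>\<^sup>+x. ennreal ((cmod (g x))\<^sup>2) \<partial>lborel)"
  using assms unfolding L2_iff_nn_integral
  by (subst L2norm_eq_nn_integral) (auto simp: less_top)

lemma L2I_L2norm_le:
  assumes g: "g \<in> borel_measurable borel" and r: "r \<ge> 0"
    and le: "(\<integral>\<^sup>+x. ennreal ((cmod (g x))\<^sup>2) \<partial>lborel) \<le> ennreal (r\<^sup>2)"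
  shows "L2 g" "L2norm g \<le> r"
proof -
  show "L2 g" using g le unfolding L2_iff_nn_integral by (auto intro: le_less_trans)
  have "enn2real (\<integral>\<^sup>+x. ennreal ((cmod (g x))\<^sup>2) \<partial>lborel) \<le> r\<^sup>2"
    using le r by (metis enn2real_ennreal enn2real_mono ennreal_neq_top top.not_eq_extremum zero_le_power2)
  then show "L2norm g \<le> r" using g r
    by (subst L2norm_eq_nn_integral) (auto intro: real_le_lsqrt)
qed

lemma borel_measurable_cnj [measurable]:
  "h \<in> borel_measurable M \<Longrightarrow> (\<lambda>x. cnj (h x)) \<in> borel_measurable M"
  using borel_measurable_continuous_on[OF continuous_on_cnj[OF continuous_on_id]] by blast

lemma borel_measurable_cis [measurable]:
  assumes [measurable]: "f \<in> borel_measurable M"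
  shows "(\<lambda>x. cis (f x)) \<in> borel_measurable M"
proof -
  have "cis \<in> borel_measurable borel"
    by (rule borel_measurable_continuous_onI) (simp add: cis_conv_exp continuous_intros)
  then show ?thesis by measurable
qed

lemma nn_integral_weighted_Cauchy_Schwarz:
  fixes w f :: "'a \<Rightarrow> real"
  assumes [measurable]: "w \<in> borel_measurable M" "f \<in> borel_measurable M"
    and w: "\<And>x. 0 \<le> w x" and f: "\<And>x. 0 \<le> f x"
  shows "(\<integral>\<^sup>+x. ennreal (w x * f x) \<partial>M)\<^sup>2
    \<le> (\<integral>\<^sup>+x. ennreal (w x) \<partial>M) * (\<integral>\<^sup>+x. ennreal (w x * (f x)\<^sup>2) \<partial>M)"
proof -
  let ?u = "\<lambda>x. ennreal (sqrt (w x))" and ?v = "\<lambda>x. ennreal (sqrt (w x) * f x)"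
  have "(\<integral>\<^sup>+x. ?u x * ?v x \<partial>M)\<^sup>2 \<le> (\<integral>\<^sup>+x. ?u x ^ 2 \<partial>M) * (\<integral>\<^sup>+x. ?v x ^ 2 \<partial>M)"
    by (rule Cauchy_Schwarz_nn_integral) auto
  moreover have "?u x * ?v x = ennreal (w x * f x)" for x
    using w[of x] by (simp add: mult.assoc[symmetric] flip: ennreal_mult')
  moreover have "?u x ^ 2 = ennreal (w x)" "?v x ^ 2 = ennreal (w x * (f x)\<^sup>2)" for x
    using w[of x] f[of x] by (simp_all add: ennreal_power power_mult_distrib)
  ultimately show ?thesis by simp
qed

lemma nn_integral_norm_mult_le_L2norm:
  assumes g: "L2 g" and h: "L2 h"
  shows "(\<integral>\<^sup>+x. ennreal (cmod (g x) * cmod (h x)) \<partial>lborel) \<le> ennreal (L2norm g * L2norm h)"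
proof -
  have [measurable]: "g \<in> borel_measurable borel" "h \<in> borel_measurable borel"
    using g h by (auto simp: L2_def)
  have "(\<integral>\<^sup>+x. ennreal (cmod (g x)) * ennreal (cmod (h x)) \<partial>lborel)\<^sup>2 \<le>
     (\<integral>\<^sup>+x. ennreal (cmod (g x)) ^ 2 \<partial>lborel) * (\<integral>\<^sup>+x. ennreal (cmod (h x)) ^ 2 \<partial>lborel)"
    by (rule Cauchy_Schwarz_nn_integral) auto
  also have "\<dots> = ennreal ((L2norm g)\<^sup>2) * ennreal ((L2norm h)\<^sup>2)"
    using g h by (simp add: ennreal_L2norm_power2 ennreal_power)
  also have "\<dots> = (ennreal (L2norm g * L2norm h))\<^sup>2"
    by (simp add: ennreal_mult' ennreal_power power_mult_distrib L2norm_nonneg)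
  finally have "(\<integral>\<^sup>+x. ennreal (cmod (g x) * cmod (h x)) \<partial>lborel)\<^sup>2 \<le> (ennreal (L2norm g * L2norm h))\<^sup>2"
    by (simp add: ennreal_mult')
  then show ?thesis
    by (rule ennreal_le_of_power2_le) (simp add: L2norm_nonneg)
qed

lemma Cauchy_Schwarz_L2:
  assumes g: "L2 g" and h: "L2 h"
  shows "integrable lborel (\<lambda>x. g x * cnj (h x))"
    "cmod (LINT x|lborel. g x * cnj (h x)) \<le> L2norm g * L2norm h"
proof -
  have [measurable]: "g \<in> borel_measurable borel" "h \<in> borel_measurable borel"
    using g h by (auto simp: L2_def)
  have bound: "(\<integral>\<^sup>+x. ennreal (cmod (g x * cnj (h x))) \<partial>lborel) \<le> ennreal (L2norm g * L2norm h)"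
    using nn_integral_norm_mult_le_L2norm[OF g h] by (simp add: norm_mult)
  show int: "integrable lborel (\<lambda>x. g x * cnj (h x))"
    unfolding integrable_iff_bounded using bound by (auto intro: le_less_trans)
  have "ennreal (cmod (LINT x|lborel. g x * cnj (h x))) \<le> ennreal (L2norm g * L2norm h)"
    using integral_norm_bound_ennreal[OF int] bound by (rule order_trans)
  then show "cmod (LINT x|lborel. g x * cnj (h x)) \<le> L2norm g * L2norm h"
    by (simp add: L2norm_nonneg)
qed

lemma L2_diff:
  assumes g: "L2 g" and h: "L2 h"
  shows "L2 (\<lambda>x. g x - h x)" "L2norm (\<lambda>x. g x - h x) \<le> L2norm g + L2norm h"
proof -
  have [measurable]: "g \<in> borel_measurable borel" "h \<in> borel_measurable borel"
    using g h by (auto simp: L2_def)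
  let ?gh = "\<lambda>x. ennreal (cmod (g x) * cmod (h x))"
  have "(\<integral>\<^sup>+x. ennreal ((cmod (g x - h x))\<^sup>2) \<partial>lborel) \<le>
        (\<integral>\<^sup>+x. ennreal ((cmod (g x))\<^sup>2) + 2 * ?gh x + ennreal ((cmod (h x))\<^sup>2) \<partial>lborel)"
  proof (rule nn_integral_mono)
    fix x
    have "(cmod (g x - h x))\<^sup>2 \<le> (cmod (g x) + cmod (h x))\<^sup>2"
      by (intro power_mono norm_triangle_ineq4) auto
    then have "ennreal ((cmod (g x - h x))\<^sup>2)
        \<le> ennreal ((cmod (g x))\<^sup>2 + 2 * (cmod (g x) * cmod (h x)) + (cmod (h x))\<^sup>2)"
      by (intro ennreal_leI) (simp add: power2_sum)
    then show "ennreal ((cmod (g x - h x))\<^sup>2) \<le> ennreal ((cmod (g x))\<^sup>2) + 2 * ?gh x + ennreal ((cmod (h x))\<^sup>2)"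
      by (simp add: ennreal_plus ennreal_mult')
  qed
  also have "\<dots> = (\<integral>\<^sup>+x. ennreal ((cmod (g x))\<^sup>2) \<partial>lborel) + 2 * (\<integral>\<^sup>+x. ?gh x \<partial>lborel)
       + (\<integral>\<^sup>+x. ennreal ((cmod (h x))\<^sup>2) \<partial>lborel)"
    by (simp add: nn_integral_add nn_integral_cmult)
  also have "\<dots> \<le> ennreal ((L2norm g)\<^sup>2) + 2 * ennreal (L2norm g * L2norm h) + ennreal ((L2norm h)\<^sup>2)"
    using nn_integral_norm_mult_le_L2norm[OF g h]
    by (simp add: ennreal_L2norm_power2 g h add_mono mult_left_mono)
  also have "\<dots> = ennreal ((L2norm g)\<^sup>2 + 2 * (L2norm g * L2norm h) + (L2norm h)\<^sup>2)"
    by (simp add: L2norm_nonneg ennreal_mult')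
  also have "\<dots> = ennreal ((L2norm g + L2norm h)\<^sup>2)"
    by (simp add: power2_sum mult.assoc add_ac)
  finally have "(\<integral>\<^sup>+x. ennreal ((cmod (g x - h x))\<^sup>2) \<partial>lborel) \<le> ennreal ((L2norm g + L2norm h)\<^sup>2)" .
  from L2I_L2norm_le[OF _ _ this]
  show "L2 (\<lambda>x. g x - h x)" "L2norm (\<lambda>x. g x - h x) \<le> L2norm g + L2norm h"
    by (auto simp: L2norm_nonneg)
qed

lemma nn_integral_add_shift:
  fixes F :: "real \<Rightarrow> ennreal"
  assumes "F \<in> borel_measurable borel"
  shows "(\<integral>\<^sup>+x. F (x + t) \<partial>lborel) = (\<integral>\<^sup>+x. F x \<partial>lborel)"
  using nn_integral_real_affine[of F 1 t] assms by (simp add: add.commute)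

lemma L2_shift:
  assumes "L2 \<eta>"
  shows "L2 (\<lambda>x. \<eta> (x + t))" "L2norm (\<lambda>x. \<eta> (x + t)) = L2norm \<eta>"
proof -
  have [measurable]: "\<eta> \<in> borel_measurable borel" using assms by (simp add: L2_def)
  have eq: "(\<integral>\<^sup>+x. ennreal ((cmod (\<eta> (x + t)))\<^sup>2) \<partial>lborel) = (\<integral>\<^sup>+x. ennreal ((cmod (\<eta> x))\<^sup>2) \<partial>lborel)"
    by (rule nn_integral_add_shift[of "\<lambda>x. ennreal ((cmod (\<eta> x))\<^sup>2)"]) measurable
  show "L2 (\<lambda>x. \<eta> (x + t))" using assms eq unfolding L2_iff_nn_integral by simp
  show "L2norm (\<lambda>x. \<eta> (x + t)) = L2norm \<eta>"
    by (subst (1 2) L2norm_eq_nn_integral) (use eq in auto)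
qed

lemma L2_bounded_by_indicator:
  fixes g :: "real \<Rightarrow> complex"
  assumes [measurable]: "g \<in> borel_measurable borel" and ab: "a \<le> b" and M: "M \<ge> 0"
    and le: "\<And>x. cmod (g x) \<le> M * indicator {a..b} x"
  shows "L2 g" "L2norm g \<le> M * sqrt (b - a)"
proof -
  have "(\<integral>\<^sup>+x. ennreal ((cmod (g x))\<^sup>2) \<partial>lborel) \<le> (\<integral>\<^sup>+x. ennreal (M\<^sup>2) * indicator {a..b} x \<partial>lborel)"
  proof (rule nn_integral_mono)
    fix x
    have "(cmod (g x))\<^sup>2 \<le> (M * indicator {a..b} x)\<^sup>2"
      using le[of x] by (intro power_mono) auto
    then show "ennreal ((cmod (g x))\<^sup>2) \<le> ennreal (M\<^sup>2) * indicator {a..b} x"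
      by (auto simp: indicator_def)
  qed
  also have "\<dots> = ennreal ((M * sqrt (b - a))\<^sup>2)"
    using ab M by (simp add: nn_integral_cmult power_mult_distrib flip: ennreal_mult)
  finally have "(\<integral>\<^sup>+x. ennreal ((cmod (g x))\<^sup>2) \<partial>lborel) \<le> ennreal ((M * sqrt (b - a))\<^sup>2)" .
  from L2I_L2norm_le[OF _ _ this] show "L2 g" "L2norm g \<le> M * sqrt (b - a)"
    using M ab by auto
qed

definition boxcar :: "real \<Rightarrow> real \<Rightarrow> real \<Rightarrow> real \<Rightarrow> complex" where
  "boxcar c a b x = complex_of_real (c * indicator {a..b} x)"

lemma boxcar_measurable [measurable]: "boxcar c a b \<in> borel_measurable borel"
  unfolding boxcar_def by measurable

lemma integrable_boxcar: "integrable lborel (boxcar c a b)"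
  unfolding boxcar_def
  by (intro integrable_of_real integrable_mult_right integrable_real_indicator) (auto simp: emeasure_lborel_Icc_eq)

lemma L2_boxcar:
  assumes "a \<le> b" "c \<ge> 0"
  shows "L2 (boxcar c a b)" "L2norm (boxcar c a b) \<le> c * sqrt (b - a)"
proof -
  have "cmod (boxcar c a b x) \<le> c * indicator {a..b} x" for x
    using assms(2) by (simp add: boxcar_def norm_mult indicator_def)
  then show "L2 (boxcar c a b)" "L2norm (boxcar c a b) \<le> c * sqrt (b - a)"
    using L2_bounded_by_indicator[of "boxcar c a b" a b c] assms by simp_all
qed

lemma nn_integral_shift_mult_indicator_le:
  assumes "L2 \<eta>" "a \<le> b"
  shows "(\<integral>\<^sup>+x. ennreal (cmod (\<eta> (x + t)) * indicator {a..b} x) \<partial>lborel)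
    \<le> ennreal (L2norm \<eta> * sqrt (b - a))"
proof -
  have "(\<integral>\<^sup>+x. ennreal (cmod (\<eta> (x + t)) * indicator {a..b} x) \<partial>lborel)
      = (\<integral>\<^sup>+x. ennreal (cmod (\<eta> (x + t)) * cmod (boxcar 1 a b x)) \<partial>lborel)"
    by (simp add: boxcar_def)
  also have "\<dots> \<le> ennreal (L2norm (\<lambda>x. \<eta> (x + t)) * L2norm (boxcar 1 a b))"
    using assms by (intro nn_integral_norm_mult_le_L2norm L2_shift(1) L2_boxcar) simp_all
  also have "\<dots> = ennreal (L2norm \<eta> * L2norm (boxcar 1 a b))"
    using L2_shift(2)[OF assms(1)] by simp
  also have "\<dots> \<le> ennreal (L2norm \<eta> * sqrt (b - a))"
    using L2_boxcar(2)[OF assms(2), of 1] by (intro ennreal_leI mult_left_mono L2norm_nonneg) simp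
  finally show ?thesis .
qed

lemma norm_integral_mult_le_nn_integral:
  fixes g k :: "real \<Rightarrow> complex"
  assumes [measurable]: "g \<in> borel_measurable borel" "k \<in> borel_measurable borel"
    and le: "\<And>x. cmod (k x) \<le> K x" and r: "r \<ge> 0"
    and int: "(\<integral>\<^sup>+x. ennreal (cmod (g x) * K x) \<partial>lborel) \<le> ennreal r"
  shows "cmod (LINT x|lborel. g x * k x) \<le> r"
proof (cases "integrable lborel (\<lambda>x. g x * k x)")
  case True
  have "ennreal (cmod (LINT x|lborel. g x * k x)) \<le> (\<integral>\<^sup>+x. ennreal (cmod (g x * k x)) \<partial>lborel)"
    using integral_norm_bound_ennreal[OF True] by simp
  also have "\<dots> \<le> (\<integral>\<^sup>+x. ennreal (cmod (g x) * K x) \<partial>lborel)"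
    by (intro nn_integral_mono ennreal_leI) (auto simp: norm_mult intro: mult_left_mono le)
  also have "\<dots> \<le> ennreal r" by (rule int)
  finally show ?thesis using r by simp
next
  case False
  then show ?thesis using r by (simp add: not_integrable_integral_eq)
qed

section \<open>Convolution by integrable functions\<close>

lemma integrated_measurable [measurable]:
  assumes [measurable]: "\<phi> \<in> borel_measurable borel" "\<psi> \<in> borel_measurable borel"
  shows "integrated \<phi> \<psi> \<in> borel_measurable borel"
proof -
  have "(\<lambda>x. LINT t|lborel. \<phi> t * \<psi> (x + t)) \<in> borel_measurable lborel"
    by measurable
  then show ?thesis unfolding integrated_def transl_def by simp
qed

lemma nn_integral_convolution_power2_le:
  fixes \<phi> \<psi> :: "real \<Rightarrow> complex"
  assumes \<phi>: "integrable lborel \<phi>" and \<psi>: "L2 \<psi>"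
  shows "(\<integral>\<^sup>+x. (\<integral>\<^sup>+t. ennreal (cmod (\<phi> t) * cmod (\<psi> (x + t))) \<partial>lborel)\<^sup>2 \<partial>lborel)
    \<le> ennreal (((LINT t|lborel. cmod (\<phi> t)) * L2norm \<psi>)\<^sup>2)"
proof -
  have [measurable]: "\<phi> \<in> borel_measurable borel" "\<psi> \<in> borel_measurable borel"
    using \<phi> \<psi> by (auto simp: L2_def)
  define A where "A = (LINT t|lborel. cmod (\<phi> t))"
  define N where "N = L2norm \<psi>"
  have A: "A \<ge> 0" "(\<integral>\<^sup>+t. ennreal (cmod (\<phi> t)) \<partial>lborel) = ennreal A"
    unfolding A_def by (simp, rule nn_integral_eq_integral) (auto intro: integrable_norm \<phi>)
  have N: "N \<ge> 0" "(\<integral>\<^sup>+x. ennreal ((cmod (\<psi> x))\<^sup>2) \<partial>lborel) = ennreal (N\<^sup>2)"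
    unfolding N_def using L2norm_nonneg ennreal_L2norm_power2[OF \<psi>] by auto
  let ?w = "\<lambda>x t. ennreal (cmod (\<phi> t) * (cmod (\<psi> (x + t)))\<^sup>2)"
  have pointwise: "(\<integral>\<^sup>+t. ennreal (cmod (\<phi> t) * cmod (\<psi> (x + t))) \<partial>lborel)\<^sup>2
      \<le> ennreal A * (\<integral>\<^sup>+t. ?w x t \<partial>lborel)" for x
  proof -
    have "(\<lambda>t. cmod (\<phi> t)) \<in> borel_measurable lborel" "(\<lambda>t. cmod (\<psi> (x + t))) \<in> borel_measurable lborel"
      by measurable
    from nn_integral_weighted_Cauchy_Schwarz[OF this]
    show ?thesis unfolding A(2)[symmetric] by simp
  qed
  have "(\<integral>\<^sup>+x. (\<integral>\<^sup>+t. ennreal (cmod (\<phi> t) * cmod (\<psi> (x + t))) \<partial>lborel)\<^sup>2 \<partial>lborel)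
      \<le> (\<integral>\<^sup>+x. ennreal A * (\<integral>\<^sup>+t. ?w x t \<partial>lborel) \<partial>lborel)"
    by (rule nn_integral_mono) (rule pointwise)
  also have "\<dots> = ennreal A * (\<integral>\<^sup>+t. (\<integral>\<^sup>+x. ?w x t \<partial>lborel) \<partial>lborel)"
    by (subst lborel_pair.Fubini') (measurable, rule nn_integral_cmult, measurable)
  also have "(\<integral>\<^sup>+t. (\<integral>\<^sup>+x. ?w x t \<partial>lborel) \<partial>lborel) = (\<integral>\<^sup>+t. ennreal (cmod (\<phi> t)) * ennreal (N\<^sup>2) \<partial>lborel)"
  proof (rule nn_integral_cong)
    fix t
    have "(\<integral>\<^sup>+x. ?w x t \<partial>lborel) = ennreal (cmod (\<phi> t)) * (\<integral>\<^sup>+x. ennreal ((cmod (\<psi> (x + t)))\<^sup>2) \<partial>lborel)"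
      by (subst nn_integral_cmult[symmetric]) (auto simp: ennreal_mult')
    also have "(\<integral>\<^sup>+x. ennreal ((cmod (\<psi> (x + t)))\<^sup>2) \<partial>lborel) = ennreal (N\<^sup>2)"
      using nn_integral_add_shift[of "\<lambda>x. ennreal ((cmod (\<psi> x))\<^sup>2)" t] N by simp
    finally show "(\<integral>\<^sup>+x. ?w x t \<partial>lborel) = ennreal (cmod (\<phi> t)) * ennreal (N\<^sup>2)" .
  qed
  also have "\<dots> = ennreal A * ennreal (N\<^sup>2)"
    by (subst nn_integral_multc) (auto simp: A)
  also have "ennreal A * (ennreal A * ennreal (N\<^sup>2)) = ennreal ((A * N)\<^sup>2)"
    using A N by (simp add: power_mult_distrib power2_eq_square mult.assoc flip: ennreal_mult)
  finally show ?thesis unfolding A_def N_def .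
qed

lemma Young_integrated:
  fixes \<phi> \<psi> :: "real \<Rightarrow> complex"
  assumes \<phi>: "integrable lborel \<phi>" and \<psi>: "L2 \<psi>"
  shows "L2 (integrated \<phi> \<psi>)"
    "L2norm (integrated \<phi> \<psi>) \<le> (LINT t|lborel. cmod (\<phi> t)) * L2norm \<psi>"
    "AE x in lborel. integrable lborel (\<lambda>t. \<phi> t * \<psi> (x + t))"
proof -
  have [measurable]: "\<phi> \<in> borel_measurable borel" "\<psi> \<in> borel_measurable borel"
    using \<phi> \<psi> by (auto simp: L2_def)
  define h where "h x = (\<integral>\<^sup>+t. ennreal (cmod (\<phi> t) * cmod (\<psi> (x + t))) \<partial>lborel)" for x
  have [measurable]: "h \<in> borel_measurable borel"
    unfolding h_def by measurable
  have h: "(\<integral>\<^sup>+x. (h x)\<^sup>2 \<partial>lborel) \<le> ennreal (((LINT t|lborel. cmod (\<phi> t)) * L2norm \<psi>)\<^sup>2)"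
    unfolding h_def by (rule nn_integral_convolution_power2_le[OF \<phi> \<psi>])
  have "ennreal (cmod (integrated \<phi> \<psi> x)) \<le> h x" for x
  proof (cases "integrable lborel (\<lambda>t. \<phi> t * \<psi> (x + t))")
    case True
    then show ?thesis
      using integral_norm_bound_ennreal[OF True]
      unfolding integrated_def transl_def h_def by (simp add: norm_mult)
  qed (simp add: integrated_def transl_def not_integrable_integral_eq)
  then have pointwise: "ennreal ((cmod (integrated \<phi> \<psi> x))\<^sup>2) \<le> (h x)\<^sup>2" for x
    by (metis ennreal_power norm_ge_zero power_mono_ennreal)
  have "(\<integral>\<^sup>+x. ennreal ((cmod (integrated \<phi> \<psi> x))\<^sup>2) \<partial>lborel)
      \<le> ennreal (((LINT t|lborel. cmod (\<phi> t)) * L2norm \<psi>)\<^sup>2)"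
    using nn_integral_mono[OF pointwise] h by (rule order_trans)
  from L2I_L2norm_le[OF _ _ this]
  show "L2 (integrated \<phi> \<psi>)" "L2norm (integrated \<phi> \<psi>) \<le> (LINT t|lborel. cmod (\<phi> t)) * L2norm \<psi>"
    by (auto simp: L2norm_nonneg)
  have "AE x in lborel. (h x)\<^sup>2 \<noteq> \<infinity>"
    by (rule nn_integral_PInf_AE) (use h in \<open>auto simp: top_unique\<close>)
  then show "AE x in lborel. integrable lborel (\<lambda>t. \<phi> t * \<psi> (x + t))"
    by eventually_elim
      (simp add: integrable_iff_bounded h_def norm_mult less_top power_eq_top_ennreal)
qed

lemma bounded_op_integrated:
  assumes \<phi>: "integrable lborel \<phi>"
  shows "bounded_op (integrated \<phi>)"
  unfolding bounded_op_def
proof (intro conjI allI impI)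
  show "L2 (integrated \<phi> \<psi>)" if "L2 \<psi>" for \<psi>
    using Young_integrated(1)[OF \<phi> that] .
  show "\<exists>C. \<forall>\<psi>. L2 \<psi> \<longrightarrow> L2norm (integrated \<phi> \<psi>) \<le> C * L2norm \<psi>"
    using Young_integrated(2)[OF \<phi>] by blast
  show "AE x in lborel. integrated \<phi> \<psi> x = integrated \<phi> \<psi>' x"
    if "L2 \<psi>" "L2 \<psi>'" "AE x in lborel. \<psi> x = \<psi>' x" for \<psi> \<psi>'
  proof (rule AE_I2)
    fix x
    have [measurable]: "\<phi> \<in> borel_measurable borel" "\<psi> \<in> borel_measurable borel"
      "\<psi>' \<in> borel_measurable borel"
      using \<phi> that by (auto simp: L2_def)
    have "AE t in lborel. \<psi> (x + t) = \<psi>' (x + t)"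
      using AE_borel_affine[of 1 "\<lambda>y. \<psi> y = \<psi>' y" x] that(3) by simp
    then show "integrated \<phi> \<psi> x = integrated \<phi> \<psi>' x"
      unfolding integrated_def transl_def by (intro integral_cong_AE) auto
  qed
  show "AE x in lborel. integrated \<phi> (\<lambda>y. \<psi> y + c * \<psi>' y) x = integrated \<phi> \<psi> x + c * integrated \<phi> \<psi>' x"
    if "L2 \<psi>" "L2 \<psi>'" for \<psi> \<psi>' c
    using Young_integrated(3)[OF \<phi> that(1)] Young_integrated(3)[OF \<phi> that(2)]
  proof eventually_elim
    case (elim x)
    have "integrated \<phi> (\<lambda>y. \<psi> y + c * \<psi>' y) x =
        (LINT t|lborel. \<phi> t * \<psi> (x + t) + c * (\<phi> t * \<psi>' (x + t)))"
      by (simp add: integrated_def transl_def algebra_simps)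
    also have "\<dots> = integrated \<phi> \<psi> x + c * integrated \<phi> \<psi>' x"
      using elim by (simp add: integrated_def transl_def)
    finally show ?case .
  qed
qed

lemma op_dist_self: "op_dist T T = 0"
proof -
  have "L2 (\<lambda>x. 0)" "L2norm (\<lambda>x. 0) = 0"
    by (auto simp: L2_def L2norm_def)
  then have "{L2norm (\<lambda>x. T \<psi> x - T \<psi> x) | \<psi>. L2 \<psi> \<and> L2norm \<psi> \<le> 1} = {0}"
    by (auto intro!: exI[of _ "\<lambda>x. 0"])
  then show ?thesis unfolding op_dist_def by simp
qed

lemma integrated_in_UL:
  assumes "integrable lborel \<phi>"
  shows "integrated \<phi> \<in> UL"
  unfolding UL_def using assms bounded_op_integrated op_dist_self by auto

lemma L2norm_diff_le_op_dist:
  assumes "bounded_op S" "bounded_op T" and \<xi>: "L2 \<xi>" "L2norm \<xi> \<le> 1"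
  shows "L2norm (\<lambda>x. S \<xi> x - T \<xi> x) \<le> op_dist S T"
  unfolding op_dist_def
proof (rule cSup_upper)
  show "L2norm (\<lambda>x. S \<xi> x - T \<xi> x) \<in> {L2norm (\<lambda>x. S \<psi> x - T \<psi> x) |\<psi>. L2 \<psi> \<and> L2norm \<psi> \<le> 1}"
    using \<xi> by blast
  obtain C D where S: "\<And>\<psi>. L2 \<psi> \<Longrightarrow> L2 (S \<psi>)" "\<And>\<psi>. L2 \<psi> \<Longrightarrow> L2norm (S \<psi>) \<le> C * L2norm \<psi>"
    and T: "\<And>\<psi>. L2 \<psi> \<Longrightarrow> L2 (T \<psi>)" "\<And>\<psi>. L2 \<psi> \<Longrightarrow> L2norm (T \<psi>) \<le> D * L2norm \<psi>"
    using assms(1,2) unfolding bounded_op_def by metis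
  have unit_ball: "E * L2norm \<psi> \<le> \<bar>E\<bar>" if "L2norm \<psi> \<le> 1" for E \<psi>
  proof -
    have "E * L2norm \<psi> \<le> \<bar>E\<bar> * L2norm \<psi>"
      by (intro mult_right_mono abs_ge_self L2norm_nonneg)
    also have "\<dots> \<le> \<bar>E\<bar>"
      using that by (intro mult_left_le) auto
    finally show ?thesis .
  qed
  have "L2norm (\<lambda>x. S \<psi> x - T \<psi> x) \<le> \<bar>C\<bar> + \<bar>D\<bar>" if "L2 \<psi>" "L2norm \<psi> \<le> 1" for \<psi>
  proof -
    have "L2norm (\<lambda>x. S \<psi> x - T \<psi> x) \<le> L2norm (S \<psi>) + L2norm (T \<psi>)"
      using L2_diff(2) S(1) T(1) that(1) by blast
    also have "\<dots> \<le> C * L2norm \<psi> + D * L2norm \<psi>"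
      using S(2) T(2) that(1) by (intro add_mono)
    also have "\<dots> \<le> \<bar>C\<bar> + \<bar>D\<bar>"
      using unit_ball that(2) by (intro add_mono)
    finally show ?thesis .
  qed
  then show "bdd_above {L2norm (\<lambda>x. S \<psi> x - T \<psi> x) |\<psi>. L2 \<psi> \<and> L2norm \<psi> \<le> 1}"
    by (auto intro!: bdd_aboveI[where M="\<bar>C\<bar> + \<bar>D\<bar>"])
qed

lemma integral_mult_cnj_op_eq:
  assumes "op_eq S T" "L2 \<psi>"
    and [measurable]: "S \<psi> \<in> borel_measurable borel" "T \<psi> \<in> borel_measurable borel" "g \<in> borel_measurable borel"
  shows "(LINT x|lborel. S \<psi> x * cnj (g x)) = (LINT x|lborel. T \<psi> x * cnj (g x))"
proof -
  have "AE x in lborel. S \<psi> x = T \<psi> x"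
    using assms(1,2) unfolding op_eq_def by blast
  then have "AE x in lborel. S \<psi> x * cnj (g x) = T \<psi> x * cnj (g x)"
    by eventually_elim simp
  then show ?thesis
    by (rule integral_cong_AE[rotated 2]) measurable
qed

section \<open>Continuity of translation in \<open>L\<^sup>1\<close>\<close>

lemma integrable_add_shift:
  fixes g :: "real \<Rightarrow> 'a::{banach, second_countable_topology}"
  assumes "integrable lborel g"
  shows "integrable lborel (\<lambda>t. g (t + s))"
  using lborel_integrable_real_affine[OF assms, of 1 s] by (simp add: add.commute)

lemma integral_add_shift:
  fixes g :: "real \<Rightarrow> 'a::{banach, second_countable_topology}"
  shows "(LINT t|lborel. g (t + s)) = (LINT t|lborel. g t)"
  using lborel_integral_real_affine[of 1 g s] by (simp add: add.commute)

lemma integrable_norm_shift_diff: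
  fixes f :: "real \<Rightarrow> 'a::{banach, second_countable_topology}"
  assumes "integrable lborel f"
  shows "integrable lborel (\<lambda>t. norm (f (t + s) - f t))"
  using integrable_add_shift[OF assms, of s] assms
  by (intro integrable_norm Bochner_Integration.integrable_diff)

lemma lborel_inner_regular_compact:
  fixes A :: "real set"
  assumes A: "A \<in> sets borel" "emeasure lborel A < \<infinity>" and e: "e > 0"
  obtains K where "compact K" "K \<subseteq> A" "measure lborel (A - K) < e"
proof -
  define M where "M = density lborel (indicator A)"
  have M: "emeasure M X = emeasure lborel (A \<inter> X)" if "X \<in> sets borel" for X
    using that A unfolding M_def
    by (auto simp: emeasure_density borel_measurable_indicator indicator_inter_arith[symmetric])
  have "emeasure M A = (SUP K \<in> {K. K \<subseteq> A \<and> compact K}. emeasure M K)"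
    by (rule inner_regular) (use M[of UNIV] A in \<open>auto simp: M_def\<close>)
  also have "\<dots> = (SUP K \<in> {K. K \<subseteq> A \<and> compact K}. emeasure lborel K)"
    by (intro SUP_cong refl) (auto simp: M compact_imp_closed borel_closed Int_absorb1)
  finally have "emeasure lborel A = (SUP K \<in> {K. K \<subseteq> A \<and> compact K}. emeasure lborel K)"
    using M[OF A(1)] by simp
  from SUP_approx_ennreal[OF e _ this] A(2)
  obtain K where K: "K \<subseteq> A" "compact K" "emeasure lborel A < emeasure lborel K + ennreal e"
    by force
  have "ennreal (measure lborel A) < ennreal (measure lborel K) + ennreal e"
    using K(3) A(2) emeasure_compact_finite[OF K(2)] by (simp add: emeasure_eq_ennreal_measure less_top)
  also have "\<dots> = ennreal (measure lborel K + e)"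
    using e by simp
  finally have "measure lborel A - measure lborel K < e"
    by (subst (asm) ennreal_less_iff) simp_all
  moreover have "measure lborel (A - K) = measure lborel A - measure lborel K"
    using A K(1,2) by (intro measure_Diff) (auto simp: borel_compact less_top)
  ultimately show ?thesis
    using that K(1,2) by simp
qed

lemma abs_indicator_diff_le:
  assumes "x \<in> K \<Longrightarrow> y \<in> U" "y \<in> K \<Longrightarrow> x \<in> U"
  shows "\<bar>indicator A x - indicator A y :: real\<bar>
    \<le> indicator (A - K) x + indicator (U - A) y + indicator (A - K) y + indicator (U - A) x"
  using assms by (cases "x \<in> A"; cases "y \<in> A"; cases "x \<in> K"; cases "y \<in> K") (auto simp: indicator_def)

lemma integral_abs_indicator_shift_le:
  fixes A K U :: "real set"
  assumes A: "A \<in> sets borel" "emeasure lborel A < \<infinity>" and K: "K \<in> sets borel" "K \<subseteq> A"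
    and U: "U \<in> sets borel" "emeasure lborel (U - A) < \<infinity>"
    and near: "\<And>t. t \<in> K \<Longrightarrow> t + s \<in> U" "\<And>t. t + s \<in> K \<Longrightarrow> t \<in> U"
  shows "(LINT t|lborel. \<bar>indicator A (t + s) - indicator A t :: real\<bar>)
    \<le> 2 * measure lborel (A - K) + 2 * measure lborel (U - A)"
proof -
  have AK: "integrable lborel (indicator (A - K) :: real \<Rightarrow> real)"
    using A K by (intro integrable_real_indicator) (auto intro: le_less_trans[OF emeasure_mono])
  have UA: "integrable lborel (indicator (U - A) :: real \<Rightarrow> real)"
    using A U by (intro integrable_real_indicator) auto
  define R where "R t = indicator (A - K) (t + s) + indicator (U - A) t + indicator (A - K) t
     + (indicator (U - A) (t + s) :: real)" for t
  have "\<bar>indicator A (t + s) - indicator A t :: real\<bar> \<le> R t" for t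
    unfolding R_def using near[of t] near[of "t + s"] by (intro abs_indicator_diff_le) simp_all
  moreover have "integrable lborel R"
    unfolding R_def using AK UA integrable_add_shift[OF AK, of s] integrable_add_shift[OF UA, of s]
    by (intro Bochner_Integration.integrable_add) auto
  moreover have "integrable lborel (indicator A :: real \<Rightarrow> real)"
    using A by simp
  ultimately have "(LINT t|lborel. \<bar>indicator A (t + s) - indicator A t :: real\<bar>) \<le> (LINT t|lborel. R t)"
    by (intro integral_mono integrable_abs Bochner_Integration.integrable_diff integrable_add_shift)
  also have "(LINT t|lborel. R t) = 2 * measure lborel (A - K) + 2 * measure lborel (U - A)"
    unfolding R_def using AK UA integrable_add_shift[OF AK, of s] integrable_add_shift[OF UA, of s]
    by (simp add: integral_add_shift[of "indicator _"])
  finally show ?thesis .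
qed

lemma tendsto_L1_shift_indicator:
  fixes A :: "real set"
  assumes A: "A \<in> sets borel" "emeasure lborel A < \<infinity>"
  shows "((\<lambda>s. LINT t|lborel. \<bar>indicator A (t + s) - indicator A t :: real\<bar>) \<longlongrightarrow> 0) (at 0)"
proof (rule tendstoI)
  fix e :: real assume e: "e > 0"
  obtain K where K: "compact K" "K \<subseteq> A" "measure lborel (A - K) < e / 4"
    using lborel_inner_regular_compact[OF A, of "e / 4"] e by auto
  obtain U where U: "open U" "A \<subseteq> U" "emeasure lborel (U - A) < ennreal (e / 4)"
    using outer_regular_lborel[OF A(1), of "e / 4"] e by auto
  obtain d where d: "d > 0" "\<And>x y. x \<in> K \<Longrightarrow> y \<notin> U \<Longrightarrow> d \<le> dist x y"
    using separate_compact_closed[OF K(1), of "-U"] U K(2) by (force simp: closed_Compl)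
  have UA: "emeasure lborel (U - A) < \<infinity>" "measure lborel (U - A) < e / 4"
    using U(3) A(1) e order.strict_trans[OF U(3) ennreal_less_top]
    by (auto simp: emeasure_eq_ennreal_measure less_top ennreal_less_iff)
  have "dist (LINT t|lborel. \<bar>indicator A (t + s) - indicator A t :: real\<bar>) 0 < e"
    if "dist s 0 < d" for s
  proof -
    \<comment> \<open>a shift by less than \<open>d\<close> cannot move a point of \<open>K\<close> out of \<open>U\<close>\<close>
    have "t + s \<in> U" if "t \<in> K" for t
      using d(2)[OF that, of "t + s"] \<open>dist s 0 < d\<close> by (force simp: dist_real_def)
    moreover have "t \<in> U" if "t + s \<in> K" for t
      using d(2)[OF that, of t] \<open>dist s 0 < d\<close> by (force simp: dist_real_def)
    ultimately have "(LINT t|lborel. \<bar>indicator A (t + s) - indicator A t :: real\<bar>)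
        \<le> 2 * measure lborel (A - K) + 2 * measure lborel (U - A)"
      using K U UA(1) by (intro integral_abs_indicator_shift_le A) (auto simp: borel_compact)
    then show ?thesis
      using K(3) UA(2) by (simp add: dist_real_def)
  qed
  then show "\<forall>\<^sub>F s in at 0. dist (LINT t|lborel. \<bar>indicator A (t + s) - indicator A t :: real\<bar>) 0 < e"
    unfolding eventually_at using d(1) by blast
qed

lemma integral_norm_shift_diff_le:
  fixes f g :: "real \<Rightarrow> 'a::{banach, second_countable_topology}"
  assumes f: "integrable lborel f" and g: "integrable lborel g"
  shows "(LINT t|lborel. norm (f (t + s) - f t))
    \<le> (LINT t|lborel. norm (g (t + s) - g t)) + 2 * (LINT t|lborel. norm (f t - g t))"
proof -
  have fg: "integrable lborel (\<lambda>t. norm (f t - g t))"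
    using f g by (intro integrable_norm Bochner_Integration.integrable_diff)
  have "(LINT t|lborel. norm (f (t + s) - f t))
      \<le> (LINT t|lborel. norm (f (t + s) - g (t + s)) + norm (g (t + s) - g t) + norm (f t - g t))"
  proof (rule integral_mono)
    show "integrable lborel (\<lambda>t. norm (f (t + s) - g (t + s)) + norm (g (t + s) - g t) + norm (f t - g t))"
      using integrable_add_shift[OF fg, of s] integrable_norm_shift_diff[OF g, of s] fg
      by (intro Bochner_Integration.integrable_add)
    show "norm (f (t + s) - f t) \<le> norm (f (t + s) - g (t + s)) + norm (g (t + s) - g t) + norm (f t - g t)" for t
      using norm_triangle_le[OF add_mono[OF norm_triangle_ineq order_refl],
          of "f (t + s) - g (t + s)" "g (t + s) - g t" "g t - f t"]
      by (simp add: norm_minus_commute)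
  qed (rule integrable_norm_shift_diff[OF f])
  also have "\<dots> = (LINT t|lborel. norm (g (t + s) - g t)) + 2 * (LINT t|lborel. norm (f t - g t))"
    using integrable_add_shift[OF fg, of s] integrable_norm_shift_diff[OF g, of s] fg
    by (simp add: integral_add_shift[of "\<lambda>t. norm (f t - g t)"])
  finally show ?thesis .
qed

lemma tendsto_integral_norm_diff_dominated:
  fixes f :: "'a \<Rightarrow> 'b::{banach, second_countable_topology}"
  assumes f: "integrable M f" and [measurable]: "\<And>i. u i \<in> borel_measurable M"
    and lim: "\<And>x. x \<in> space M \<Longrightarrow> (\<lambda>i. u i x) \<longlonglongrightarrow> f x"
    and bound: "\<And>i x. x \<in> space M \<Longrightarrow> norm (u i x) \<le> 2 * norm (f x)"
  shows "(\<lambda>i. LINT x|M. norm (f x - u i x)) \<longlonglongrightarrow> 0"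
proof -
  have [measurable]: "f \<in> borel_measurable M" using f by auto
  have "(\<lambda>i. LINT x|M. norm (f x - u i x)) \<longlonglongrightarrow> (LINT x|M. 0)"
  proof (rule integral_dominated_convergence[where w="\<lambda>x. 3 * norm (f x)"])
    show "integrable M (\<lambda>x. 3 * norm (f x))" using f by auto
    show "AE x in M. (\<lambda>i. norm (f x - u i x)) \<longlonglongrightarrow> 0"
    proof (rule AE_I2)
      fix x assume "x \<in> space M"
      then have "(\<lambda>i. f x - u i x) \<longlonglongrightarrow> f x - f x"
        by (intro tendsto_diff tendsto_const lim)
      then show "(\<lambda>i. norm (f x - u i x)) \<longlonglongrightarrow> 0"
        by (simp add: tendsto_norm_zero)
    qed
    show "AE x in M. norm (norm (f x - u i x)) \<le> 3 * norm (f x)" for i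
    proof (rule AE_I2)
      fix x assume "x \<in> space M"
      then show "norm (norm (f x - u i x)) \<le> 3 * norm (f x)"
        using bound[of x i] norm_triangle_ineq4[of "f x" "u i x"] by simp
    qed
  qed auto
  then show ?thesis by simp
qed

lemma integral_norm_shift_diff_add_le:
  fixes f g :: "real \<Rightarrow> 'a::{banach, second_countable_topology}"
  assumes f: "integrable lborel f" and g: "integrable lborel g"
  shows "(LINT t|lborel. norm (f (t + s) + g (t + s) - (f t + g t)))
    \<le> (LINT t|lborel. norm (f (t + s) - f t)) + (LINT t|lborel. norm (g (t + s) - g t))"
proof -
  have "(LINT t|lborel. norm (f (t + s) + g (t + s) - (f t + g t)))
      \<le> (LINT t|lborel. norm (f (t + s) - f t) + norm (g (t + s) - g t))"
  proof (rule integral_mono)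
    show "norm (f (t + s) + g (t + s) - (f t + g t)) \<le> norm (f (t + s) - f t) + norm (g (t + s) - g t)" for t
      using norm_triangle_ineq[of "f (t + s) - f t" "g (t + s) - g t"] by (simp add: algebra_simps)
  qed (use f g in \<open>auto intro: integrable_norm_shift_diff Bochner_Integration.integrable_add\<close>)
  then show ?thesis
    using integrable_norm_shift_diff[OF f] integrable_norm_shift_diff[OF g] by simp
qed

lemma tendsto_L1_shift_of_approx:
  fixes f :: "real \<Rightarrow> 'a::{banach, second_countable_topology}"
  assumes f: "integrable lborel f"
    and approx: "\<And>e. e > 0 \<Longrightarrow> \<exists>g. integrable lborel g \<and> (LINT t|lborel. norm (f t - g t)) < e
      \<and> ((\<lambda>s. LINT t|lborel. norm (g (t + s) - g t)) \<longlongrightarrow> 0) (at 0)"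
  shows "((\<lambda>s. LINT t|lborel. norm (f (t + s) - f t)) \<longlongrightarrow> 0) (at 0)"
proof (rule order_tendstoI)
  fix e :: real assume e: "0 < e"
  then obtain g where g: "integrable lborel g" "(LINT t|lborel. norm (f t - g t)) < e / 3"
    and g_lim: "((\<lambda>s. LINT t|lborel. norm (g (t + s) - g t)) \<longlongrightarrow> 0) (at 0)"
    using approx[of "e / 3"] by auto
  have "\<forall>\<^sub>F s in at 0. (LINT t|lborel. norm (g (t + s) - g t)) < e / 3"
    using order_tendstoD(2)[OF g_lim, of "e / 3"] e by simp
  then show "\<forall>\<^sub>F s in at 0. (LINT t|lborel. norm (f (t + s) - f t)) < e"
  proof eventually_elim
    case (elim s)
    then show ?case
      using integral_norm_shift_diff_le[OF f g(1), of s] g(2) by linarith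
  qed
next
  fix y :: real assume "y < 0"
  then show "\<forall>\<^sub>F s in at 0. y < (LINT t|lborel. norm (f (t + s) - f t))"
    by (intro always_eventually allI order.strict_trans2[OF \<open>y < 0\<close>]) simp
qed

lemma tendsto_L1_shift:
  fixes \<phi> :: "real \<Rightarrow> 'a::{banach, second_countable_topology}"
  assumes "integrable lborel \<phi>"
  shows "((\<lambda>s. LINT t|lborel. norm (\<phi> (t + s) - \<phi> t)) \<longlongrightarrow> 0) (at 0)"
  using assms
proof (induct rule: integrable_induct)
  case (base A c)
  have eq: "(LINT t|lborel. norm (indicator A (t + s) *\<^sub>R c - indicator A t *\<^sub>R c))
      = (LINT t|lborel. \<bar>indicator A (t + s) - indicator A t :: real\<bar>) * norm c" for s
    by (simp flip: scaleR_left_diff_distrib)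
  have "((\<lambda>s. (LINT t|lborel. \<bar>indicator A (t + s) - indicator A t :: real\<bar>) * norm c) \<longlongrightarrow> 0) (at 0)"
    using base by (intro tendsto_mult_left_zero tendsto_L1_shift_indicator) auto
  then show ?case by (simp only: eq)
next
  case (add f g)
  then show ?case
    using integral_norm_shift_diff_add_le[OF add(1,3)]
    by (intro tendsto_sandwich[OF _ _ tendsto_const tendsto_add_zero[OF add(2,4)]] always_eventually allI)
      simp_all
next
  case (lim f u)
  have "(\<lambda>i. LINT x|lborel. norm (f x - u i x)) \<longlonglongrightarrow> 0"
    using lim by (intro tendsto_integral_norm_diff_dominated) auto
  show ?case
  proof (rule tendsto_L1_shift_of_approx[OF lim(5)])
    fix e :: real assume "e > 0"
    then obtain i where "(LINT x|lborel. norm (f x - u i x)) < e"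
      using order_tendstoD(2)[OF \<open>(\<lambda>i. _) \<longlonglongrightarrow> 0\<close>] by (auto simp: eventually_sequentially)
    then show "\<exists>g. integrable lborel g \<and> (LINT t|lborel. norm (f t - g t)) < e
        \<and> ((\<lambda>s. LINT t|lborel. norm (g (t + s) - g t)) \<longlongrightarrow> 0) (at 0)"
      using lim(1,2) by blast
  qed
qed

section \<open>Chirps and the oscillation estimate\<close>

definition chirp :: "real \<Rightarrow> real \<Rightarrow> complex" where
  "chirp a y = cis (y\<^sup>2) * indicator {a..a+1} y"

lemma chirp_measurable [measurable]: "chirp a \<in> borel_measurable borel"
  unfolding chirp_def by measurable

lemma norm_chirp: "cmod (chirp a y) = indicator {a..a+1} y"
  by (simp add: chirp_def indicator_def)

lemma L2_chirp: "L2 (chirp a)" "L2norm (chirp a) \<le> 1"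
  using L2_bounded_by_indicator[of "chirp a" a "a + 1" 1] by (simp_all add: norm_chirp)

lemma norm_cis_minus_1_le: "cmod (cis \<theta> - 1) \<le> \<bar>\<theta>\<bar>"
proof -
  have "(cmod (cis \<theta> - 1))\<^sup>2 = (cos \<theta> - 1)\<^sup>2 + (sin \<theta>)\<^sup>2"
    by (simp add: cmod_power2)
  also have "\<dots> = 4 * (sin (\<theta> / 2))\<^sup>2"
    using sin_cos_squared_add[of \<theta>] cos_double_sin[of "\<theta> / 2"] by (simp add: power2_diff algebra_simps)
  also have "\<dots> \<le> 4 * (\<theta> / 2)\<^sup>2"
  proof -
    have "(sin (\<theta> / 2))\<^sup>2 \<le> (\<theta> / 2)\<^sup>2"
      using abs_sin_x_le_abs_x[of "\<theta> / 2"] by (simp only: abs_le_square_iff)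
    then show ?thesis by simp
  qed
  also have "\<dots> = \<bar>\<theta>\<bar>\<^sup>2"
    by (simp add: power2_eq_square)
  finally show ?thesis
    using abs_ge_zero power2_le_imp_le by blast
qed

lemma norm_chirp_shift_add_le:
  assumes s: "0 < s" "s \<le> 1" and a: "2 * a * s = pi"
  shows "cmod (chirp a (y - s) + chirp a y)
    \<le> 3 * s * indicator {a..a+1} y + indicator {a..a+s} y + indicator {a+1..a+1+s} y"
proof (cases "y \<in> {a..a+1} \<and> y - s \<in> {a..a+1}")
  case True
  define \<theta> where "\<theta> = s\<^sup>2 - 2 * (y - a) * s"
  \<comment> \<open>the shift by \<open>s\<close> turns the phase of the chirp by \<open>\<pi>\<close> up to the small angle \<open>\<theta>\<close>\<close>
  have "(y - s)\<^sup>2 = y\<^sup>2 + \<theta> - pi"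
    unfolding \<theta>_def a[symmetric] by (simp add: power2_diff algebra_simps)
  then have "cis ((y - s)\<^sup>2) = cis (y\<^sup>2) * cis \<theta> * cis (- pi)"
    by (simp add: cis_mult)
  moreover have "cis (- pi) = -1"
    by (simp add: complex_eq_iff)
  ultimately have "chirp a (y - s) + chirp a y = cis (y\<^sup>2) * (1 - cis \<theta>)"
    using True by (simp add: chirp_def algebra_simps)
  then have "cmod (chirp a (y - s) + chirp a y) = cmod (cis \<theta> - 1)"
    by (simp add: norm_mult norm_minus_commute)
  also have "\<dots> \<le> \<bar>\<theta>\<bar>" by (rule norm_cis_minus_1_le)
  also have "\<dots> \<le> 3 * s"
  proof -
    have "0 \<le> y - a" "y - a \<le> 1" using True by auto
    then have "0 \<le> 2 * (y - a) * s" "2 * (y - a) * s \<le> 2 * s" using s by (auto simp: mult_left_le)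
    moreover have "s\<^sup>2 \<le> s" using s by (simp add: power2_eq_square mult_left_le)
    moreover have "0 \<le> s\<^sup>2" by simp
    ultimately show ?thesis unfolding \<theta>_def by linarith
  qed
  finally show ?thesis using True s by (simp add: indicator_def)
next
  case False
  then consider "y \<in> {a..a+s}" "y - s \<notin> {a..a+1}" | "y \<in> {a+1..a+1+s}" "y \<notin> {a..a+1}"
    | "y \<notin> {a..a+1}" "y - s \<notin> {a..a+1}"
    using s by fastforce
  then show ?thesis
    by cases (use s in \<open>auto simp: chirp_def indicator_def\<close>)
qed

lemma nn_integral_shift_mult_indicator_le_sqrt:
  assumes \<eta>: "L2 \<eta>" "L2norm \<eta> \<le> 1" and l: "0 \<le> l"
  shows "(\<integral>\<^sup>+y. ennreal (cmod (\<eta> (y + t)) * indicator {c..c+l} y) \<partial>lborel) \<le> ennreal (sqrt l)"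
proof -
  have "(\<integral>\<^sup>+y. ennreal (cmod (\<eta> (y + t)) * indicator {c..c+l} y) \<partial>lborel) \<le> ennreal (L2norm \<eta> * sqrt (c + l - c))"
    using l by (intro nn_integral_shift_mult_indicator_le \<eta>(1)) simp
  also have "\<dots> \<le> ennreal (sqrt l)"
    using \<eta>(2) l by (intro ennreal_leI) (simp add: mult_left_le_one_le L2norm_nonneg)
  finally show ?thesis .
qed

lemma nn_integral_shift_mult_chirp_kernel_le:
  assumes \<eta>: "L2 \<eta>" "L2norm \<eta> \<le> 1" and s: "0 < s"
  shows "(\<integral>\<^sup>+y. ennreal (cmod (\<eta> (y + t))
      * (3 * s * indicator {a..a+1} y + indicator {a..a+s} y + indicator {a+1..a+1+s} y)) \<partial>lborel)
    \<le> ennreal (3 * s + 2 * sqrt s)"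
proof -
  have [measurable]: "\<eta> \<in> borel_measurable borel" using \<eta> by (simp add: L2_def)
  have split: "ennreal (3 * s * X + Y + Z) = ennreal (3 * s) * ennreal X + ennreal Y + ennreal Z"
    if "0 \<le> X" "0 \<le> Y" "0 \<le> Z" for X Y Z :: real
    using that s by (simp add: ennreal_plus ennreal_mult)
  have "ennreal (cmod (\<eta> (y + t))
      * (3 * s * indicator {a..a+1} y + indicator {a..a+s} y + indicator {a+1..a+1+s} y))
    = ennreal (3 * s) * ennreal (cmod (\<eta> (y + t)) * indicator {a..a+1} y)
      + ennreal (cmod (\<eta> (y + t)) * indicator {a..a+s} y)
      + ennreal (cmod (\<eta> (y + t)) * indicator {a+1..a+1+s} y)" for y
    by (simp only: distrib_left mult.left_commute[of _ "3 * s"]) (rule split; simp)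
  then have "(\<integral>\<^sup>+y. ennreal (cmod (\<eta> (y + t))
      * (3 * s * indicator {a..a+1} y + indicator {a..a+s} y + indicator {a+1..a+1+s} y)) \<partial>lborel)
    = ennreal (3 * s) * (\<integral>\<^sup>+y. ennreal (cmod (\<eta> (y + t)) * indicator {a..a+1} y) \<partial>lborel)
      + (\<integral>\<^sup>+y. ennreal (cmod (\<eta> (y + t)) * indicator {a..a+s} y) \<partial>lborel)
      + (\<integral>\<^sup>+y. ennreal (cmod (\<eta> (y + t)) * indicator {a+1..a+1+s} y) \<partial>lborel)"
    by (simp add: nn_integral_add nn_integral_cmult)
  also have "\<dots> \<le> ennreal (3 * s) * ennreal 1 + ennreal (sqrt s) + ennreal (sqrt s)"
    using nn_integral_shift_mult_indicator_le_sqrt[OF \<eta>, of 1 t a]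
      nn_integral_shift_mult_indicator_le_sqrt[OF \<eta>, of s t a]
      nn_integral_shift_mult_indicator_le_sqrt[OF \<eta>, of s t "a + 1"] s
    by (intro add_mono mult_left_mono) (simp_all add: add_ac)
  also have "\<dots> = ennreal (3 * s + 2 * sqrt s)"
    using s by (simp add: ennreal_plus[symmetric] del: ennreal_plus)
  finally show ?thesis .
qed

lemma chirp_pairing_almost_antiperiodic:
  assumes \<eta>: "L2 \<eta>" "L2norm \<eta> \<le> 1" and s: "0 < s" "s \<le> 1" and a: "2 * a * s = pi"
  shows "cmod ((LINT x|lborel. \<eta> (x + (t + s)) * cnj (chirp a x)) + (LINT x|lborel. \<eta> (x + t) * cnj (chirp a x)))
    \<le> 3 * s + 2 * sqrt s"
proof -
  have [measurable]: "\<eta> \<in> borel_measurable borel" using \<eta> by (simp add: L2_def)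
  have "(LINT x|lborel. \<eta> (x + (t + s)) * cnj (chirp a x)) = (LINT y|lborel. \<eta> (y + t) * cnj (chirp a (y - s)))"
    using integral_add_shift[of "\<lambda>y. \<eta> (y + t) * cnj (chirp a (y - s))" s] by (simp add: add_ac)
  moreover have "integrable lborel (\<lambda>y. \<eta> (y + t) * cnj (chirp a (y - s)))"
    using L2_shift(1)[OF L2_chirp(1)[of a], of "- s"]
    by (intro Cauchy_Schwarz_L2(1) L2_shift(1)[OF \<eta>(1)]) simp
  moreover have "integrable lborel (\<lambda>y. \<eta> (y + t) * cnj (chirp a y))"
    by (intro Cauchy_Schwarz_L2(1) L2_shift(1)[OF \<eta>(1)] L2_chirp)
  ultimately have "(LINT x|lborel. \<eta> (x + (t + s)) * cnj (chirp a x)) + (LINT x|lborel. \<eta> (x + t) * cnj (chirp a x))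
      = (LINT y|lborel. \<eta> (y + t) * (cnj (chirp a (y - s)) + cnj (chirp a y)))"
    by (simp add: distrib_left)
  also have "cmod \<dots> \<le> 3 * s + 2 * sqrt s"
  proof (rule norm_integral_mult_le_nn_integral)
    show "cmod (cnj (chirp a (y - s)) + cnj (chirp a y))
      \<le> 3 * s * indicator {a..a+1} y + indicator {a..a+s} y + indicator {a+1..a+1+s} y" for y
      using norm_chirp_shift_add_le[OF s a, of y] by (simp flip: complex_cnj_add)
  qed (use s nn_integral_shift_mult_chirp_kernel_le[OF \<eta> s(1)] in auto)
  finally show ?thesis .
qed

lemma integral_integrated_mult_cnj:
  assumes \<phi>: "integrable lborel \<phi>" and \<eta>: "L2 \<eta>" and g: "L2 g"
  shows "(LINT x|lborel. integrated \<phi> \<eta> x * cnj (g x))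
    = (LINT t|lborel. \<phi> t * (LINT x|lborel. \<eta> (x + t) * cnj (g x)))"
proof -
  have [measurable]: "\<phi> \<in> borel_measurable borel" "\<eta> \<in> borel_measurable borel" "g \<in> borel_measurable borel"
    using \<phi> \<eta> g by (auto simp: L2_def)
  define F where "F x t = \<phi> t * \<eta> (x + t) * cnj (g x)" for x t
  have [measurable]: "(\<lambda>(x, t). F x t) \<in> borel_measurable (lborel \<Otimes>\<^sub>M lborel)"
    unfolding F_def by measurable
  have "(\<lambda>z. ennreal (norm (case z of (x, t) \<Rightarrow> F x t))) \<in> borel_measurable (lborel \<Otimes>\<^sub>M lborel)"
    by measurable
  from lborel_pair.nn_integral_snd[OF this]
  have Tonelli: "(\<integral>\<^sup>+z. ennreal (norm (case z of (x, t) \<Rightarrow> F x t)) \<partial>(lborel \<Otimes>\<^sub>M lborel))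
      = (\<integral>\<^sup>+t. (\<integral>\<^sup>+x. ennreal (norm (F x t)) \<partial>lborel) \<partial>lborel)"
    by simp
  have "(\<integral>\<^sup>+t. (\<integral>\<^sup>+x. ennreal (norm (F x t)) \<partial>lborel) \<partial>lborel)
      \<le> (\<integral>\<^sup>+t. ennreal (cmod (\<phi> t)) * ennreal (L2norm \<eta> * L2norm g) \<partial>lborel)"
  proof (rule nn_integral_mono)
    fix t
    have "(\<integral>\<^sup>+x. ennreal (norm (F x t)) \<partial>lborel)
        = ennreal (cmod (\<phi> t)) * (\<integral>\<^sup>+x. ennreal (cmod (\<eta> (x + t)) * cmod (g x)) \<partial>lborel)"
      by (subst nn_integral_cmult[symmetric]) (auto simp: F_def norm_mult ennreal_mult' mult.assoc)
    also have "\<dots> \<le> ennreal (cmod (\<phi> t)) * ennreal (L2norm \<eta> * L2norm g)"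
      using nn_integral_norm_mult_le_L2norm[OF L2_shift(1)[OF \<eta>] g] L2_shift(2)[OF \<eta>]
      by (intro mult_left_mono) auto
    finally show "(\<integral>\<^sup>+x. ennreal (norm (F x t)) \<partial>lborel) \<le> ennreal (cmod (\<phi> t)) * ennreal (L2norm \<eta> * L2norm g)" .
  qed
  also have "\<dots> < \<infinity>"
    using \<phi> by (simp add: nn_integral_multc integrable_iff_bounded ennreal_mult_less_top)
  finally have "integrable (lborel \<Otimes>\<^sub>M lborel) (\<lambda>(x, t). F x t)"
    unfolding integrable_iff_bounded Tonelli by simp
  then have "(LINT t|lborel. (LINT x|lborel. F x t)) = (LINT x|lborel. (LINT t|lborel. F x t))"
    by (rule lborel_pair.Fubini_integral)
  moreover have "(LINT x|lborel. F x t) = \<phi> t * (LINT x|lborel. \<eta> (x + t) * cnj (g x))" for t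
    by (simp add: F_def mult.assoc)
  moreover have "(LINT t|lborel. F x t) = integrated \<phi> \<eta> x * cnj (g x)" for x
    by (simp add: F_def integrated_def transl_def)
  ultimately show ?thesis
    by simp
qed

lemma norm_integral_mult_almost_antiperiodic_le:
  fixes \<phi> G :: "real \<Rightarrow> complex"
  assumes \<phi>: "integrable lborel \<phi>" and [measurable]: "G \<in> borel_measurable borel"
    and G: "\<And>t. cmod (G t) \<le> 1" and G_shift: "\<And>t. cmod (G (t + s) + G t) \<le> \<beta>"
  shows "2 * cmod (LINT t|lborel. \<phi> t * G t)
    \<le> (LINT t|lborel. cmod (\<phi> (t + s) - \<phi> t)) + (LINT t|lborel. cmod (\<phi> t)) * \<beta>"
proof -
  have [measurable]: "\<phi> \<in> borel_measurable borel" using \<phi> by auto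
  have \<phi>s: "integrable lborel (\<lambda>t. \<phi> (t + s))" by (rule integrable_add_shift[OF \<phi>])
  have \<beta>: "\<beta> \<ge> 0" using norm_ge_zero G_shift[of 0] by (rule order_trans)
  have i1: "integrable lborel (\<lambda>t. \<phi> t * G t)"
    by (rule Bochner_Integration.integrable_bound[OF \<phi>]) (auto simp: norm_mult intro!: AE_I2 mult_left_le G)
  have i2: "integrable lborel (\<lambda>t. \<phi> (t + s) * G (t + s))"
    by (rule Bochner_Integration.integrable_bound[OF \<phi>s]) (auto simp: norm_mult intro!: AE_I2 mult_left_le G)
  \<comment> \<open>average the integral with its translate by \<open>s\<close>\<close>
  have "2 * (LINT t|lborel. \<phi> t * G t) = (LINT t|lborel. \<phi> t * G t) + (LINT t|lborel. \<phi> (t + s) * G (t + s))"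
    by (simp only: mult_2 integral_add_shift[of "\<lambda>t. \<phi> t * G t" s])
  also have "\<dots> = (LINT t|lborel. \<phi> t * G t + \<phi> (t + s) * G (t + s))"
    using i1 i2 by (rule Bochner_Integration.integral_add[symmetric])
  also have "\<dots> = (LINT t|lborel. (\<phi> t - \<phi> (t + s)) * G t + \<phi> (t + s) * (G (t + s) + G t))"
    by (rule Bochner_Integration.integral_cong) (simp_all add: algebra_simps)
  also have "cmod \<dots> \<le> (LINT t|lborel. cmod ((\<phi> t - \<phi> (t + s)) * G t + \<phi> (t + s) * (G (t + s) + G t)))"
    by (rule integral_norm_bound)
  also have "\<dots> \<le> (LINT t|lborel. cmod (\<phi> (t + s) - \<phi> t) + cmod (\<phi> (t + s)) * \<beta>)"
  proof (rule integral_mono')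
    show "integrable lborel (\<lambda>t. cmod (\<phi> (t + s) - \<phi> t) + cmod (\<phi> (t + s)) * \<beta>)"
      by (intro Bochner_Integration.integrable_add integrable_norm_shift_diff[OF \<phi>]
          integrable_mult_left integrable_norm[OF \<phi>s])
    show "0 \<le> cmod (\<phi> (t + s) - \<phi> t) + cmod (\<phi> (t + s)) * \<beta>" for t
      using \<beta> by simp
    fix t
    have "cmod ((\<phi> t - \<phi> (t + s)) * G t) \<le> cmod (\<phi> (t + s) - \<phi> t)"
      using G[of t] by (simp add: norm_mult norm_minus_commute mult_left_le)
    moreover have "cmod (\<phi> (t + s) * (G (t + s) + G t)) \<le> cmod (\<phi> (t + s)) * \<beta>"
      using G_shift[of t] by (simp add: norm_mult mult_left_mono)
    ultimately show "cmod ((\<phi> t - \<phi> (t + s)) * G t + \<phi> (t + s) * (G (t + s) + G t))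
        \<le> cmod (\<phi> (t + s) - \<phi> t) + cmod (\<phi> (t + s)) * \<beta>"
      by (rule order_trans[OF norm_triangle_ineq add_mono])
  qed
  also have "\<dots> = (LINT t|lborel. cmod (\<phi> (t + s) - \<phi> t)) + (LINT t|lborel. cmod (\<phi> t)) * \<beta>"
    using integrable_norm_shift_diff[OF \<phi>, of s] integrable_norm[OF \<phi>s]
      integral_add_shift[of "\<lambda>t. cmod (\<phi> t)" s]
    by (simp add: Bochner_Integration.integral_add)
  finally show ?thesis by (simp add: norm_mult)
qed

lemma norm_integrated_pairing_chirp_le:
  assumes \<phi>: "integrable lborel \<phi>" and \<eta>: "L2 \<eta>" "L2norm \<eta> \<le> 1"
    and s: "0 < s" "s \<le> 1" and a: "2 * a * s = pi"
  shows "2 * cmod (LINT x|lborel. integrated \<phi> \<eta> x * cnj (chirp a x))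
    \<le> (LINT t|lborel. cmod (\<phi> (t + s) - \<phi> t)) + (LINT t|lborel. cmod (\<phi> t)) * (3 * s + 2 * sqrt s)"
proof -
  have [measurable]: "\<eta> \<in> borel_measurable borel" using \<eta> by (simp add: L2_def)
  define G where "G = (\<lambda>t. LINT x|lborel. \<eta> (x + t) * cnj (chirp a x))"
  have "G \<in> borel_measurable borel"
    unfolding G_def by measurable
  moreover have "cmod (G t) \<le> 1" for t
  proof -
    have "cmod (G t) \<le> L2norm (\<lambda>x. \<eta> (x + t)) * L2norm (chirp a)"
      unfolding G_def by (rule Cauchy_Schwarz_L2(2)[OF L2_shift(1)[OF \<eta>(1)] L2_chirp(1)])
    also have "\<dots> \<le> 1"
      using \<eta>(2) L2_chirp(2) L2_shift(2)[OF \<eta>(1)] by (simp add: mult_le_one L2norm_nonneg)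
    finally show ?thesis .
  qed
  moreover have "cmod (G (t + s) + G t) \<le> 3 * s + 2 * sqrt s" for t
    unfolding G_def by (rule chirp_pairing_almost_antiperiodic[OF \<eta> s a])
  ultimately have "2 * cmod (LINT t|lborel. \<phi> t * G t)
    \<le> (LINT t|lborel. cmod (\<phi> (t + s) - \<phi> t)) + (LINT t|lborel. cmod (\<phi> t)) * (3 * s + 2 * sqrt s)"
    by (rule norm_integral_mult_almost_antiperiodic_le[OF \<phi>])
  then show ?thesis
    unfolding G_def integral_integrated_mult_cnj[OF \<phi> \<eta>(1) L2_chirp(1)] .
qed

lemma integrated_pairing_chirp_small:
  assumes \<phi>: "integrable lborel \<phi>" and e: "e > 0"
  obtains a where "\<And>\<eta>. L2 \<eta> \<Longrightarrow> L2norm \<eta> \<le> 1 \<Longrightarrow>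
    cmod (LINT x|lborel. integrated \<phi> \<eta> x * cnj (chirp a x)) < e"
proof -
  define A where "A = (LINT t|lborel. cmod (\<phi> t))"
  have "((\<lambda>s. (LINT t|lborel. cmod (\<phi> (t + s) - \<phi> t)) + A * (3 * s + 2 * sqrt s))
      \<longlongrightarrow> 0 + A * (3 * 0 + 2 * sqrt 0)) (at_right 0)"
    by (intro tendsto_intros tendsto_mono[OF at_le[OF subset_UNIV] tendsto_L1_shift[OF \<phi>]])
  then have "\<forall>\<^sub>F s in at_right 0. (LINT t|lborel. cmod (\<phi> (t + s) - \<phi> t)) + A * (3 * s + 2 * sqrt s) < 2 * e"
    by (rule order_tendstoD(2)) (use e in simp)
  moreover have "\<forall>\<^sub>F s in at_right 0. 0 < s \<and> s \<le> (1::real)"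
    by (auto simp: eventually_at_right_field intro: exI[of _ 1])
  ultimately obtain s where s: "0 < s" "s \<le> 1"
    and small: "(LINT t|lborel. cmod (\<phi> (t + s) - \<phi> t)) + A * (3 * s + 2 * sqrt s) < 2 * e"
    using eventually_happens'[OF trivial_limit_at_right_real eventually_conj] by blast
  have a: "2 * (pi / (2 * s)) * s = pi" using s by simp
  show ?thesis
  proof (rule that)
    fix \<eta> assume \<eta>: "L2 \<eta>" "L2norm \<eta> \<le> 1"
    from norm_integrated_pairing_chirp_le[OF \<phi> \<eta> s a] small
    show "cmod (LINT x|lborel. integrated \<phi> \<eta> x * cnj (chirp (pi / (2 * s)) x)) < e"
      unfolding A_def by linarith
  qed
qed

lemma UL_pairing_chirp_small:
  assumes L: "L \<in> UL" and e: "e > 0"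
  obtains a where "\<And>\<eta>. L2 \<eta> \<Longrightarrow> L2norm \<eta> \<le> 1 \<Longrightarrow> cmod (LINT x|lborel. L \<eta> x * cnj (chirp a x)) < e"
proof -
  have "bounded_op L" and approx: "\<And>e. e > 0 \<Longrightarrow> \<exists>\<phi>. integrable lborel \<phi> \<and> op_dist L (integrated \<phi>) < e"
    using L unfolding UL_def by auto
  then have L2L: "\<And>\<eta>. L2 \<eta> \<Longrightarrow> L2 (L \<eta>)"
    unfolding bounded_op_def by blast
  obtain \<phi> where \<phi>: "integrable lborel \<phi>" "op_dist L (integrated \<phi>) < e / 2"
    using approx[of "e / 2"] e by auto
  obtain a where a: "\<And>\<eta>. L2 \<eta> \<Longrightarrow> L2norm \<eta> \<le> 1 \<Longrightarrow>
      cmod (LINT x|lborel. integrated \<phi> \<eta> x * cnj (chirp a x)) < e / 2"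
    using integrated_pairing_chirp_small[OF \<phi>(1), of "e / 2"] e by auto
  have "cmod (LINT x|lborel. L \<eta> x * cnj (chirp a x)) < e" if \<eta>: "L2 \<eta>" "L2norm \<eta> \<le> 1" for \<eta>
  proof -
    define D where "D x = L \<eta> x - integrated \<phi> \<eta> x" for x
    have I: "L2 (integrated \<phi> \<eta>)" by (rule Young_integrated(1)[OF \<phi>(1) \<eta>(1)])
    have D: "L2 D" unfolding D_def by (rule L2_diff(1)[OF L2L[OF \<eta>(1)] I])
    have "(LINT x|lborel. L \<eta> x * cnj (chirp a x))
        = (LINT x|lborel. D x * cnj (chirp a x)) + (LINT x|lborel. integrated \<phi> \<eta> x * cnj (chirp a x))"
      using Bochner_Integration.integral_add[OF Cauchy_Schwarz_L2(1)[OF D L2_chirp(1)[of a]] Cauchy_Schwarz_L2(1)[OF I L2_chirp(1)[of a]]]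
      by (simp add: D_def algebra_simps)
    also have "cmod \<dots> < e / 2 + e / 2"
    proof (rule le_less_trans[OF norm_triangle_ineq add_le_less_mono])
      have "cmod (LINT x|lborel. D x * cnj (chirp a x)) \<le> L2norm D * L2norm (chirp a)"
        by (rule Cauchy_Schwarz_L2(2)[OF D L2_chirp(1)])
      also have "\<dots> \<le> L2norm D"
        using L2_chirp(2) by (intro mult_left_le L2norm_nonneg)
      also have "\<dots> \<le> op_dist L (integrated \<phi>)"
        unfolding D_def using \<open>bounded_op L\<close> bounded_op_integrated[OF \<phi>(1)] \<eta>
        by (rule L2norm_diff_le_op_dist)
      finally show "cmod (LINT x|lborel. D x * cnj (chirp a x)) \<le> e / 2"
        using \<phi>(2) by simp
    qed (rule a[OF \<eta>])
    finally show ?thesis by simp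
  qed
  then show ?thesis by (rule that)
qed

section \<open>The counterexample\<close>

lemma cis_square_in_Cb: "(\<lambda>x. cis (x\<^sup>2)) \<in> Cb"
  unfolding Cb_def bounded_iff
  by (auto simp: cis_conv_exp intro!: continuous_intros exI[of _ 1])

lemma chirp_pairing_boxcar:
  "(LINT x|lborel. mult_op (\<lambda>x. cis (x\<^sup>2)) (integrated (boxcar 1 0 1) (boxcar c a (a + 2))) x * cnj (chirp a x))
    = complex_of_real c"
proof -
  have "integrated (boxcar 1 0 1) (boxcar c a (a + 2)) x = c" if "x \<in> {a..a+1}" for x
  proof -
    have "integrated (boxcar 1 0 1) (boxcar c a (a + 2)) x = (LINT t|lborel. boxcar c 0 1 t)"
      unfolding integrated_def transl_def
      by (rule Bochner_Integration.integral_cong) (use that in \<open>auto simp: boxcar_def indicator_def\<close>)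
    then show ?thesis by (simp add: boxcar_def)
  qed
  then have "mult_op (\<lambda>x. cis (x\<^sup>2)) (integrated (boxcar 1 0 1) (boxcar c a (a + 2))) x * cnj (chirp a x)
      = boxcar c a (a + 1) x" for x
    by (cases "x \<in> {a..a+1}") (simp_all add: mult_op_def chirp_def boxcar_def cis_cnj cis_mult)
  then show ?thesis by (simp add: boxcar_def)
qed

lemma bounded_op_boxcar_le_1:
  assumes "bounded_op B"
  obtains c where "c > 0" "\<And>a. L2 (B (boxcar c a (a + 2)))" "\<And>a. L2norm (B (boxcar c a (a + 2))) \<le> 1"
proof -
  obtain C where B: "\<And>\<psi>. L2 \<psi> \<Longrightarrow> L2 (B \<psi>)" "\<And>\<psi>. L2 \<psi> \<Longrightarrow> L2norm (B \<psi>) \<le> C * L2norm \<psi>"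
    using assms unfolding bounded_op_def by blast
  define c where "c = 1 / (2 * (\<bar>C\<bar> + 1))"
  have c: "c > 0" "\<bar>C\<bar> * (2 * c) \<le> 1" unfolding c_def by (simp_all add: field_simps)
  have box_L2: "L2 (boxcar c a (a + 2))" "L2norm (boxcar c a (a + 2)) \<le> 2 * c" for a
  proof -
    show "L2 (boxcar c a (a + 2))"
      using L2_boxcar(1)[of a "a + 2" c] c(1) by simp
    have "L2norm (boxcar c a (a + 2)) \<le> c * sqrt 2"
      using L2_boxcar(2)[of a "a + 2" c] c(1) by simp
    also have "\<dots> \<le> c * 2"
      using c(1) sqrt2_less_2 by (intro mult_left_mono) auto
    finally show "L2norm (boxcar c a (a + 2)) \<le> 2 * c" by simp
  qed
  have "L2norm (B (boxcar c a (a + 2))) \<le> 1" for a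
  proof -
    have "L2norm (B (boxcar c a (a + 2))) \<le> \<bar>C\<bar> * L2norm (boxcar c a (a + 2))"
      using B(2)[OF box_L2(1)] by (rule order_trans) (intro mult_right_mono abs_ge_self L2norm_nonneg)
    also have "\<dots> \<le> \<bar>C\<bar> * (2 * c)"
      using box_L2(2) by (intro mult_left_mono) simp_all
    also have "\<dots> \<le> 1" by (rule c(2))
    finally show ?thesis .
  qed
  with c(1) B(1)[OF box_L2(1)] show ?thesis by (rule that)
qed

theorem proposition8p2:
  shows "\<exists>f\<in>Cb. \<exists>L\<in>UL. \<not> (\<exists>L'\<in>UL. \<exists>B. bounded_op B \<and>
           op_eq (\<lambda>\<psi>. mult_op f (L \<psi>)) (\<lambda>\<psi>. L' (B \<psi>)))"
proof (intro bexI[OF _ cis_square_in_Cb] bexI[OF _ integrated_in_UL[OF integrable_boxcar]] notI)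
  let ?fL = "\<lambda>\<psi>. mult_op (\<lambda>x. cis (x\<^sup>2)) (integrated (boxcar 1 0 1) \<psi>)"
  assume "\<exists>L'\<in>UL. \<exists>B. bounded_op B \<and> op_eq ?fL (\<lambda>\<psi>. L' (B \<psi>))"
  then obtain L' B where L': "L' \<in> UL" and B: "bounded_op B" and eq: "op_eq ?fL (\<lambda>\<psi>. L' (B \<psi>))"
    by blast
  obtain c where c: "c > 0" and Bbox: "\<And>a. L2 (B (boxcar c a (a + 2)))" "\<And>a. L2norm (B (boxcar c a (a + 2))) \<le> 1"
    using bounded_op_boxcar_le_1[OF B] by blast
  obtain a where small: "\<And>\<eta>. L2 \<eta> \<Longrightarrow> L2norm \<eta> \<le> 1 \<Longrightarrow> cmod (LINT x|lborel. L' \<eta> x * cnj (chirp a x)) < c"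
    using UL_pairing_chirp_small[OF L' c] by blast
  have "L2 (L' (B (boxcar c a (a + 2))))"
    using L' Bbox(1) unfolding UL_def bounded_op_def by blast
  then have "L' (B (boxcar c a (a + 2))) \<in> borel_measurable borel"
    by (simp add: L2_def)
  moreover have "?fL (boxcar c a (a + 2)) \<in> borel_measurable borel"
    unfolding mult_op_def by measurable
  ultimately have "(LINT x|lborel. ?fL (boxcar c a (a + 2)) x * cnj (chirp a x))
      = (LINT x|lborel. L' (B (boxcar c a (a + 2))) x * cnj (chirp a x))"
    by (intro integral_mult_cnj_op_eq[OF eq L2_boxcar(1)] chirp_measurable) (use c in simp_all)
  then have "cmod (LINT x|lborel. ?fL (boxcar c a (a + 2)) x * cnj (chirp a x)) < c"
    using small[OF Bbox(1)[of a] Bbox(2)[of a]] by simp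
  then show False
    using c by (simp add: chirp_pairing_boxcar)
qed
end
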